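(* For any $n\in\mathbb{N}$, the monoid $\mathrm{rps}_n$ has polynomial growth.
   Context: Let $\mathcal{A}_n=\{1<2<\cdots<n\}$. An rPS tableau is a finite (possibly empty) sequence of nonempty bottom-justified columns of boxes filled with positive integers, such that the entries of each column are weakly decreasing from top to bottom and the bottom entries of the columns form a strictly increasing sequence from left to right. Right insertion of a symbol $a$ into an rPS tableau $B$: if $a$ is strictly greater than every entry of the bottom row, append a new column consisting of $a$ at the right end; otherwise, let $z$ be the leftmost bottom-row entry with $z\geq a$ and put $a$ in a new box at the bottom of the column of $z$ (the previous entries of that column move up one box). For $w=w_1\cdots w_k$, $\mathfrak{R}_r(w)$ is obtained by starting with the empty tableau and right-inserting $w_1,\dots,w_k$ in order. The monoid $\mathrm{rps}_n$ is the quotient of the free monoid $\mathcal{A}_n^*$ by the congruence $u\equiv v\iff\mathfrak{R}_r(u)=\mathfrak{R}_r(v)$. For a monoid $M$ generated by a finite set $\Sigma$, the growth function $\gamma_M(N)$ is the number of elements of $M$ expressible as products of at most $N$ generators; $M$ has polynomial growth if $\gamma_M(N)$ is bounded above by $N^k$ for some $k$ (up to the usual equivalence of growth functions), a notion independent of the finite generating set. *)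

theory Defs
  imports Main
begin

text \<open>An rPS tableau is a list of columns (left to right); each column is a
list of entries read from BOTTOM to TOP (so the head is the bottom entry).\<close>

type_synonym rps_tableau = "nat list list"

fun rps_rinsert :: "nat \<Rightarrow> rps_tableau \<Rightarrow> rps_tableau" where
  "rps_rinsert a [] = [[a]]"
| "rps_rinsert a (c # cs) =
     (if a \<le> hd c then (a # c) # cs else c # rps_rinsert a cs)"

definition rps_R :: "nat list \<Rightarrow> rps_tableau" where
  "rps_R w = foldl (\<lambda>T a. rps_rinsert a T) [] w"

definition alph :: "nat \<Rightarrow> nat set" where
  "alph n = {1..n}"

definition rps_equiv :: "nat \<Rightarrow> nat list \<Rightarrow> nat list \<Rightarrow> bool" where
  "rps_equiv n u v \<longleftrightarrow> u \<in> lists (alph n) \<and> v \<in> lists (alph n) \<and> rps_R u = rps_R v"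

definition rps_class :: "nat \<Rightarrow> nat list \<Rightarrow> nat list set" where
  "rps_class n w = {v. rps_equiv n w v}"

definition rps_growth :: "nat \<Rightarrow> nat \<Rightarrow> nat" where
  "rps_growth n N = card (rps_class n ` {w \<in> lists (alph n). length w \<le> N})"

definition poly_growth :: "(nat \<Rightarrow> nat) \<Rightarrow> bool" where
  "poly_growth \<gamma> \<longleftrightarrow> (\<exists>C k::nat. \<forall>N\<ge>1. \<gamma> N \<le> C * N ^ k)"

end

theory Submission
  imports Defs "HOL-Library.FuncSet" "HOL-Library.Multiset"
begin

text \<open>A word of length at most N over A_n inserts into a tableau with at most n columns
(the bottom entries are distinct letters), each column a sorted list of at most N letters.
A sorted list is determined by its letter counts, so there are at most (N+1)^n possible
columns and hence at most (n+1)(N+1)^(n^2) tableaux, a polynomial in N.\<close>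

definition rps_wf :: "nat \<Rightarrow> rps_tableau \<Rightarrow> bool" where
  "rps_wf n T \<longleftrightarrow>
     (\<forall>c\<in>set T. c \<noteq> [] \<and> sorted c \<and> set c \<subseteq> alph n) \<and> sorted_wrt (<) (map hd T)"

lemma set_map_hd_rps_rinsert: "set (map hd (rps_rinsert a T)) \<subseteq> insert a (set (map hd T))"
  by (induction T) auto

lemma length_concat_rps_rinsert: "length (concat (rps_rinsert a T)) = Suc (length (concat T))"
  by (induction T) auto

lemma rps_wf_rinsert:
  assumes "rps_wf n T" and "a \<in> alph n"
  shows "rps_wf n (rps_rinsert a T)"
  using assms
proof (induction T)
  case Nil
  then show ?case by (simp add: rps_wf_def)
next
  case (Cons c cs)
  show ?case
  proof (cases "a \<le> hd c")
    case True
    have "sorted (a # c)" using Cons.prems True by (cases c) (auto simp: rps_wf_def)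
    moreover have "\<forall>x\<in>set cs. a < hd x" using Cons.prems True by (auto simp: rps_wf_def)
    ultimately show ?thesis using Cons.prems True by (auto simp: rps_wf_def)
  next
    case False
    have "rps_wf n cs" using Cons.prems(1) by (simp add: rps_wf_def)
    then have "rps_wf n (rps_rinsert a cs)" using Cons.IH Cons.prems(2) by blast
    moreover have "\<forall>x\<in>set (map hd (rps_rinsert a cs)). hd c < x"
      using set_map_hd_rps_rinsert[of a cs] False Cons.prems(1) by (auto simp: rps_wf_def)
    ultimately show ?thesis using Cons.prems False by (auto simp: rps_wf_def)
  qed
qed

lemma rps_wf_R: "w \<in> lists (alph n) \<Longrightarrow> rps_wf n (rps_R w)"
proof (induction w rule: rev_induct)
  case Nil
  then show ?case by (simp add: rps_R_def rps_wf_def)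
next
  case (snoc a w)
  then show ?case by (simp add: rps_R_def rps_wf_rinsert)
qed

lemma length_concat_rps_R: "length (concat (rps_R w)) = length w"
  by (induction w rule: rev_induct) (simp_all add: rps_R_def length_concat_rps_rinsert)

lemma rps_wf_length_le:
  assumes "rps_wf n T"
  shows "length T \<le> n"
proof -
  have "distinct (map hd T)"
    using assms by (simp add: rps_wf_def strict_sorted_iff)
  moreover have "set (map hd T) \<subseteq> alph n"
    using assms hd_in_set by (fastforce simp: rps_wf_def)
  ultimately show ?thesis
    using card_mono[of "alph n" "set (map hd T)"] distinct_card by (fastforce simp: alph_def)
qed

lemma length_le_length_concat: "c \<in> set T \<Longrightarrow> length c \<le> length (concat T)"
  by (induction T) auto

lemma rps_class_eq:
  assumes "w \<in> lists (alph n)"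
  shows "rps_class n w = {v \<in> lists (alph n). rps_R v = rps_R w}"
  using assms by (auto simp: rps_class_def rps_equiv_def)

lemma card_sorted_lists_le:
  fixes A :: "'a::linorder set"
  assumes "finite A"
  shows "card {xs. sorted xs \<and> set xs \<subseteq> A \<and> length xs \<le> N} \<le> (N + 1) ^ card A"
    (is "card ?S \<le> _")
proof -
  define counts where "counts xs = restrict (count (mset xs)) A" for xs
  have "inj_on counts ?S"
  proof (rule inj_onI)
    fix xs ys assume xs: "xs \<in> ?S" and ys: "ys \<in> ?S" and "counts xs = counts ys"
    have "count (mset xs) a = count (mset ys) a" for a
    proof (cases "a \<in> A")
      case True
      have "counts xs a = counts ys a" using \<open>counts xs = counts ys\<close> by simp
      then show ?thesis using True by (simp add: counts_def)
    next
      case False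
      then have "a \<notin> set xs" "a \<notin> set ys" using xs ys by auto
      then show ?thesis by (metis count_mset_0_iff)
    qed
    then have "mset xs = mset ys" by (rule multiset_eqI)
    then have "sort ys = xs" using xs by (intro properties_for_sort) auto
    then show "xs = ys" using ys by (simp add: sorted_sort_id)
  qed
  have "count (mset xs) a \<le> N" if "xs \<in> ?S" for xs a
    using count_le_size[of "mset xs" a] that by simp
  then have "counts ` ?S \<subseteq> (\<Pi>\<^sub>E a\<in>A. {0..N})"
    by (auto simp: counts_def)
  then have "card (counts ` ?S) \<le> card (\<Pi>\<^sub>E a\<in>A. {0..N})"
    using assms by (intro card_mono finite_PiE) auto
  then have "card ?S \<le> card (\<Pi>\<^sub>E a\<in>A. {0..N})"
    using card_image[OF \<open>inj_on counts ?S\<close>] by simp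
  then show ?thesis by (simp add: card_PiE assms)
qed

lemma card_lists_length_le_bound:
  assumes "finite C" and "C \<noteq> {}"
  shows "card {xs. set xs \<subseteq> C \<and> length xs \<le> k} \<le> (k + 1) * card C ^ k"
proof -
  have "1 \<le> card C" using assms by (simp add: Suc_le_eq card_gt_0_iff)
  then have "(\<Sum>i\<le>k. card C ^ i) \<le> (\<Sum>i\<le>k. card C ^ k)"
    by (intro sum_mono power_increasing) auto
  then show ?thesis by (simp add: card_lists_length_le assms(1))
qed

lemma rps_R_bounded:
  assumes "w \<in> lists (alph n)" and "length w \<le> N"
  shows "set (rps_R w) \<subseteq> {c. sorted c \<and> set c \<subseteq> alph n \<and> length c \<le> N}"
    and "length (rps_R w) \<le> n"
proof -
  have wf: "rps_wf n (rps_R w)" using assms(1) by (rule rps_wf_R)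
  show "length (rps_R w) \<le> n" using wf by (rule rps_wf_length_le)
  have "length c \<le> N" if "c \<in> set (rps_R w)" for c
    using length_le_length_concat[OF that] length_concat_rps_R[of w] assms(2) by simp
  then show "set (rps_R w) \<subseteq> {c. sorted c \<and> set c \<subseteq> alph n \<and> length c \<le> N}"
    using wf by (auto simp: rps_wf_def)
qed

lemma card_rps_R_image_le:
  "card (rps_R ` {w \<in> lists (alph n). length w \<le> N}) \<le> (n + 1) * (N + 1) ^ (n * n)"
proof -
  define Cols where "Cols = {c. sorted c \<and> set c \<subseteq> alph n \<and> length c \<le> N}"
  have "finite Cols"
    unfolding Cols_def
    by (rule finite_subset[OF _ finite_lists_length_le[of "alph n" N]]) (auto simp: alph_def)
  have "card Cols \<le> (N + 1) ^ n"
    using card_sorted_lists_le[of "alph n" N] by (simp add: Cols_def alph_def)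
  have "rps_R ` {w \<in> lists (alph n). length w \<le> N} \<subseteq> {T. set T \<subseteq> Cols \<and> length T \<le> n}"
    using rps_R_bounded unfolding Cols_def by blast
  then have "card (rps_R ` {w \<in> lists (alph n). length w \<le> N})
      \<le> card {T. set T \<subseteq> Cols \<and> length T \<le> n}"
    by (rule card_mono[OF finite_lists_length_le[OF \<open>finite Cols\<close>]])
  also have "\<dots> \<le> (n + 1) * card Cols ^ n"
  proof (rule card_lists_length_le_bound[OF \<open>finite Cols\<close>])
    have "[] \<in> Cols" by (simp add: Cols_def)
    then show "Cols \<noteq> {}" by blast
  qed
  also have "\<dots> \<le> (n + 1) * ((N + 1) ^ n) ^ n"
    using \<open>card Cols \<le> (N + 1) ^ n\<close> by (intro mult_le_mono2 power_mono) auto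
  finally show ?thesis by (simp add: power_mult)
qed

lemma rps_growth_le_card_rps_R_image:
  "rps_growth n N \<le> card (rps_R ` {w \<in> lists (alph n). length w \<le> N})"
proof -
  define W where "W = {w \<in> lists (alph n). length w \<le> N}"
  have "finite W"
    unfolding W_def using finite_lists_length_le[of "alph n" N]
    by (simp add: alph_def lists_eq_set)
  have "rps_class n ` W = (\<lambda>T. {v \<in> lists (alph n). rps_R v = T}) ` rps_R ` W"
    unfolding image_image by (rule image_cong) (auto simp: W_def rps_class_eq)
  then show ?thesis
    unfolding rps_growth_def W_def[symmetric] using \<open>finite W\<close> by (simp add: card_image_le)
qed

theorem theorem4p3:
  fixes n :: nat
  shows "poly_growth (rps_growth n)"
  unfolding poly_growth_def
proof (intro exI allI impI)
  fix N :: nat assume "N \<ge> 1"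
  have "rps_growth n N \<le> (n + 1) * (N + 1) ^ (n * n)"
    using rps_growth_le_card_rps_R_image card_rps_R_image_le by (rule le_trans)
  also have "\<dots> \<le> (n + 1) * (2 * N) ^ (n * n)"
    using \<open>N \<ge> 1\<close> by (intro mult_le_mono2 power_mono) auto
  also have "\<dots> = ((n + 1) * 2 ^ (n * n)) * N ^ (n * n)"
    by (simp add: power_mult_distrib algebra_simps)
  finally show "rps_growth n N \<le> ((n + 1) * 2 ^ (n * n)) * N ^ (n * n)" .
qed

end
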